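(* Let $\mathbf a\in\mathbb{R}^{\mathbb{N}}$ satisfy: (1) $\mathbf a\ge 0$, $\Delta\mathbf a\le 0$ and $(\Delta\mathbf a)_1<0$; and (2) $\Delta^2\mathbf a\ge 0$ and $(\Delta^2\mathbf a)_1>0$. Then the linear centrality $f^{\mathbf a}$ is rank monotone.
   Context: Graphs are finite directed graphs; $d_G(x,y)$ is the shortest directed path length from $x$ to $y$ ($\infty$ if none). The linear centrality is $f^{\mathbf a}_G(i)=\sum_{z\in V_G,\ d_G(z,i)<\infty}a_{d_G(z,i)}$. For a sequence $\mathbf a$, $\Delta\mathbf a$ is the sequence with $(\Delta\mathbf a)_0=0$ and $(\Delta\mathbf a)_i=a_{i+1}-a_i$ for $i>0$; $\Delta^2\mathbf a=\Delta(\Delta\mathbf a)$; $\mathbf a\ge0$ ($\le0$) means every entry is $\ge0$ ($\le 0$). For a graph $G$ and distinct nodes $x,y$ with $(x,y)\notin E_G$, let $G'$ be $G$ with the arc $x\to y$ added. A centrality $f$ is rank monotone if for all such $G,x,y$ and every node $w\ne y$: if $f_G(w)\le f_G(y)$ then $f_{G'}(w)<f_{G'}(y)$. *)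

theory Defs
  imports Main "HOL-Library.Extended_Nat"
begin

definition is_digraph :: "'v set \<Rightarrow> ('v \<times> 'v) set \<Rightarrow> bool" where
  "is_digraph V E \<longleftrightarrow> finite V \<and> E \<subseteq> V \<times> V"

definition dist :: "('v \<times> 'v) set \<Rightarrow> 'v \<Rightarrow> 'v \<Rightarrow> enat" where
  "dist E x y = (if \<exists>n. (x, y) \<in> E ^^ n
                 then enat (LEAST n. (x, y) \<in> E ^^ n) else \<infinity>)"

definition lin_centrality :: "(nat \<Rightarrow> real) \<Rightarrow> 'v set \<Rightarrow> ('v \<times> 'v) set \<Rightarrow> 'v \<Rightarrow> real" where
  "lin_centrality a V E i =
     (\<Sum>z \<in> {z \<in> V. dist E z i < \<infinity>}. a (the_enat (dist E z i)))"

definition Delta :: "(nat \<Rightarrow> real) \<Rightarrow> nat \<Rightarrow> real" where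
  "Delta a i = (if i = 0 then 0 else a (Suc i) - a i)"

definition rank_monotone :: "('v set \<Rightarrow> ('v \<times> 'v) set \<Rightarrow> 'v \<Rightarrow> real) \<Rightarrow> bool" where
  "rank_monotone f \<longleftrightarrow>
     (\<forall>V E x y. is_digraph V E \<and> x \<in> V \<and> y \<in> V \<and> x \<noteq> y \<and> (x, y) \<notin> E \<longrightarrow>
        (\<forall>w \<in> V. w \<noteq> y \<longrightarrow>
           f V E w \<le> f V E y \<longrightarrow> f V (insert (x, y) E) w < f V (insert (x, y) E) y))"

end

theory Submission
  imports Defs
begin

text \<open>Adding the arc \<open>x \<rightarrow> y\<close> turns the distance from \<open>z\<close> to \<open>v\<close> into
  \<open>min (d z v) (d z x + 1 + d y v)\<close>, so the centrality of \<open>v\<close> grows by a sum over \<open>z\<close> of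
  gains \<open>a\<^bsub>min D S\<^esub> - a\<^bsub>D\<^esub>\<close>. For \<open>v = y\<close> the new walk has length \<open>S = d z x + 1\<close>,
  for \<open>v = w\<close> it has length \<open>S + K\<close> with \<open>K = d y w \<ge> 1\<close>, while \<open>d z w \<le> d z y + K\<close>.
  As \<open>a\<close> is nonincreasing the gain grows with \<open>D\<close>, and as \<open>a\<close> is convex shifting both \<open>D\<close>
  and \<open>S\<close> by \<open>K\<close> can only shrink it. So every node contributes at least as much to \<open>y\<close> as
  to \<open>w\<close>, and \<open>x\<close> itself, with \<open>S = 1\<close> and \<open>D = d x y \<ge> 2\<close>, contributes strictly more by
  the strict conditions at index 1.\<close>

lemma relpow_mono: "E \<subseteq> F \<Longrightarrow> E ^^ n \<subseteq> (F :: 'a rel) ^^ n"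
  by (induction n) (simp_all add: relcomp_mono)

lemma dist_le_relpow: "(u, v) \<in> E ^^ n \<Longrightarrow> dist E u v \<le> enat n"
  unfolding dist_def by (auto intro: Least_le)

lemma relpow_dist: "dist E u v = enat n \<Longrightarrow> (u, v) \<in> E ^^ n"
  unfolding dist_def by (auto split: if_splits intro: LeastI)

lemma dist_eq_0_iff: "dist E u v = 0 \<longleftrightarrow> u = v"
  using relpow_dist[of E u v 0] dist_le_relpow[of u v 0 E] by (auto simp: zero_enat_def[symmetric])

lemma dist_refl [simp]: "dist E u u = 0"
  by (simp add: dist_eq_0_iff)

lemma dist_edge: "(u, v) \<in> E \<Longrightarrow> dist E u v \<le> 1"
  using dist_le_relpow[of u v 1 E] by (simp add: one_enat_def)

lemma dist_ge_1: "u \<noteq> v \<Longrightarrow> 1 \<le> dist E u v"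
  using dist_eq_0_iff[of E u v] by (cases "dist E u v") (auto simp: one_enat_def zero_enat_def)

lemma dist_ge_2: "u \<noteq> v \<Longrightarrow> (u, v) \<notin> E \<Longrightarrow> 2 \<le> dist E u v"
proof (cases "dist E u v")
  case (enat n)
  assume "u \<noteq> v" "(u, v) \<notin> E"
  with relpow_dist[OF enat] have "2 \<le> n" by (metis One_nat_def less_2_cases not_le relpow_0_E relpow_1)
  then show ?thesis using enat by (simp add: numeral_eq_enat)
qed simp

lemma dist_triangle_ineq: "dist E u w \<le> dist E u v + dist E v w"
proof (cases "dist E u v"; cases "dist E v w")
  fix m n assume m: "dist E u v = enat m" and n: "dist E v w = enat n"
  have "(u, w) \<in> E ^^ (m + n)"
    using relpow_dist[OF m] relpow_dist[OF n] by (auto simp: relpow_add)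
  then have "dist E u w \<le> enat (m + n)" by (rule dist_le_relpow)
  then show ?thesis by (simp add: m n)
qed simp_all

lemma dist_mono:
  assumes "E \<subseteq> F" shows "dist F u v \<le> dist E u v"
proof (cases "dist E u v")
  case (enat n)
  with relpow_dist[OF enat] relpow_mono[OF assms] have "(u, v) \<in> F ^^ n" by blast
  then show ?thesis using enat by (simp add: dist_le_relpow)
qed simp

lemma dist_insert_le_relpow:
  "(z, v) \<in> insert (x, y) E ^^ n \<Longrightarrow> min (dist E z v) (dist E z x + 1 + dist E y v) \<le> enat n"
proof (induction n arbitrary: v)
  case 0
  then show ?case by (simp add: zero_enat_def[symmetric] min_le_iff_disj)
next
  case (Suc n)
  then obtain u where zu: "(z, u) \<in> insert (x, y) E ^^ n" and uv: "(u, v) \<in> insert (x, y) E"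
    by auto
  note IH = Suc.IH[OF zu]
  show ?case
  proof (cases "(u, v) \<in> E")
    case True
    have "dist E z v \<le> dist E z u + 1" "dist E y v \<le> dist E y u + 1"
      using dist_triangle_ineq[of E _ v u] dist_edge[OF True] by (meson add_left_mono order_trans)+
    then have "min (dist E z v) (dist E z x + 1 + dist E y v)
        \<le> min (dist E z u + 1) (dist E z x + 1 + dist E y u + 1)"
      by (intro min.mono) (simp_all add: add.assoc add_left_mono)
    also have "\<dots> = min (dist E z u) (dist E z x + 1 + dist E y u) + 1"
      by (rule min_of_mono) (simp add: mono_def add_right_mono)
    also have "\<dots> \<le> enat (Suc n)" using IH by (metis add_right_mono eSuc_enat eSuc_plus_1)
    finally show ?thesis .
  next
    case False
    with uv have "u = x" "v = y" by auto
    with IH have "dist E z x \<le> enat n" by (auto simp: min_le_iff_disj intro: order_trans)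
    then show ?thesis using \<open>v = y\<close>
      by (simp add: min_le_iff_disj eSuc_enat[symmetric] eSuc_plus_1)
  qed
qed

lemma dist_insert:
  "dist (insert (x, y) E) z v = min (dist E z v) (dist E z x + 1 + dist E y v)"
proof (rule antisym)
  have "dist (insert (x, y) E) z v \<le> dist E z x + 1 + dist E y v"
  proof (cases "dist E z x"; cases "dist E y v")
    fix p q assume "dist E z x = enat p" "dist E y v = enat q"
    then have "(z, x) \<in> insert (x, y) E ^^ p" "(y, v) \<in> insert (x, y) E ^^ q"
      using relpow_mono[of E "insert (x, y) E"] by (auto dest!: relpow_dist)
    then have "(z, v) \<in> insert (x, y) E ^^ (p + 1 + q)"
      unfolding relpow_add by auto
    then show ?thesis using dist_le_relpow \<open>dist E z x = enat p\<close> \<open>dist E y v = enat q\<close>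
      by (metis one_enat_def plus_enat_simps(1))
  qed simp_all
  then show "dist (insert (x, y) E) z v \<le> min (dist E z v) (dist E z x + 1 + dist E y v)"
    using dist_mono[of E "insert (x, y) E"] by auto
next
  show "min (dist E z v) (dist E z x + 1 + dist E y v) \<le> dist (insert (x, y) E) z v"
    by (cases "dist (insert (x, y) E) z v") (auto dest: relpow_dist dist_insert_le_relpow)
qed

definition weight :: "(nat \<Rightarrow> real) \<Rightarrow> enat \<Rightarrow> real" where
  "weight a d = (case d of enat n \<Rightarrow> a n | \<infinity> \<Rightarrow> 0)"

lemma weight_enat [simp]: "weight a (enat n) = a n"
  and weight_infinity [simp]: "weight a \<infinity> = 0"
  by (simp_all add: weight_def)

definition gain :: "(nat \<Rightarrow> real) \<Rightarrow> enat \<Rightarrow> enat \<Rightarrow> real" where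
  "gain a D S = weight a (min D S) - weight a D"

lemma gain_eq_0: "D \<le> S \<Longrightarrow> gain a D S = 0"
  by (simp add: gain_def min_absorb1)

lemma gain_eq_diff: "S \<le> D \<Longrightarrow> gain a D S = weight a S - weight a D"
  by (simp add: gain_def min_absorb2)

lemma lin_centrality_eq_sum_weight:
  "finite V \<Longrightarrow> lin_centrality a V E i = (\<Sum>z\<in>V. weight a (dist E z i))"
  unfolding lin_centrality_def
  by (subst sum.inter_filter) (auto intro!: sum.cong split: enat.split)

lemma lin_centrality_insert_diff:
  "finite V \<Longrightarrow> lin_centrality a V (insert (x, y) E) v - lin_centrality a V E v
     = (\<Sum>z\<in>V. gain a (dist E z v) (dist E z x + 1 + dist E y v))"
  by (simp add: lin_centrality_eq_sum_weight dist_insert gain_def sum_subtractf)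

text \<open>Since \<open>(\<Delta>a)\<^sub>0 = 0\<close>, the hypotheses say nothing about \<open>a 0\<close> beyond \<open>0 \<le> a 0\<close>; this is
  harmless, as distance 0 only occurs from a node to itself.\<close>

locale convex_weights =
  fixes a :: "nat \<Rightarrow> real"
  assumes nonneg: "0 \<le> a i"
    and decreasing: "1 \<le> i \<Longrightarrow> a (Suc i) \<le> a i"
    and convex: "1 \<le> i \<Longrightarrow> a (Suc i) - a (Suc (Suc i)) \<le> a i - a (Suc i)"
begin

lemma antimono_weights:
  assumes "1 \<le> i" "i \<le> j" shows "a j \<le> a i"
  using assms(2) by (induction j rule: dec_induct) (use assms(1) decreasing in \<open>auto intro: order_trans\<close>)

lemma differences_antimono:
  assumes "1 \<le> i" shows "a (i + k) - a (Suc (i + k)) \<le> a i - a (Suc i)"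
proof (induction k)
  case (Suc k)
  with convex[of "i + k"] assms show ?case by simp
qed simp

lemma differences_shift_le:
  assumes "1 \<le> t" "t \<le> m" shows "a (t + k) - a (m + k) \<le> a t - a m"
  using assms(2)
proof (induction m rule: dec_induct)
  case (step m)
  with differences_antimono[of m k] assms(1) show ?case by simp
qed simp

lemma weight_nonneg: "0 \<le> weight a D"
  by (cases D) (simp_all add: nonneg)

lemma weight_antimono: "1 \<le> D \<Longrightarrow> D \<le> D' \<Longrightarrow> weight a D' \<le> weight a D"
  by (cases D; cases D') (auto simp: one_enat_def nonneg antimono_weights)

lemma gain_nonneg: "1 \<le> S \<Longrightarrow> 0 \<le> gain a D S"
  by (cases "D \<le> S") (simp_all add: gain_eq_0 gain_eq_diff weight_antimono)

lemma gain_mono: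
  assumes "1 \<le> S" "D \<le> D'" shows "gain a D S \<le> gain a D' S"
proof (cases "D \<le> S")
  case True
  then show ?thesis using gain_nonneg[OF assms(1)] by (simp add: gain_eq_0)
next
  case False
  with assms have "S \<le> D" "S \<le> D'" "1 \<le> D" by auto
  then show ?thesis using assms by (simp add: gain_eq_diff weight_antimono)
qed

lemma gain_shift_le:
  assumes S: "1 \<le> S" shows "gain a (D + K) (S + K) \<le> gain a D S"
proof (cases "D \<le> S")
  case True
  then show ?thesis using S by (simp add: gain_eq_0 add_right_mono)
next
  case False
  then obtain s where s: "S = enat s" "1 \<le> s" "s < D"
    using S by (cases S) (auto simp: one_enat_def)
  show ?thesis
  proof (cases K)
    case infinity
    then show ?thesis using gain_nonneg[OF S] by (simp add: gain_eq_0)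
  next
    case (enat k)
    show ?thesis
    proof (cases D)
      case infinity
      then show ?thesis using s enat antimono_weights[of s "s + k"] by (simp add: gain_eq_diff)
    next
      case (enat m)
      then show ?thesis using s \<open>K = enat k\<close> differences_shift_le[of s m k]
        by (simp add: gain_eq_diff)
    qed
  qed
qed

lemma gain_detour_le:
  assumes "1 \<le> S" "D' \<le> D + K" shows "gain a D' (S + K) \<le> gain a D S"
  using gain_mono[OF _ assms(2), of "S + K"] gain_shift_le[OF assms(1), of D K] assms(1)
  by (meson add_increasing2 order_trans zero_le)

end

locale strictly_convex_weights = convex_weights +
  assumes strictly_decreasing: "a 2 < a 1"
    and strictly_convex: "a 2 - a 3 < a 1 - a 2"
begin

lemma differences_shift_less:
  assumes "2 \<le> m" "1 \<le> k" shows "a (1 + k) - a (m + k) < a 1 - a m"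
proof -
  have "a (1 + k) - a (2 + k) \<le> a 2 - a 3"
    using differences_antimono[of 2 "k - 1"] assms(2) by (simp add: numeral_eq_Suc)
  moreover have "a (2 + k) - a (m + k) \<le> a 2 - a m"
    using differences_shift_le[of 2 m k] assms(1) by simp
  ultimately show ?thesis using strictly_convex by linarith
qed

lemma gain_shift_less:
  assumes D: "2 \<le> D" and K: "1 \<le> K" shows "gain a (D + K) (1 + K) < gain a D 1"
proof -
  have "1 \<le> D" using D order_trans one_le_numeral by blast
  then have gain_D: "gain a D 1 = a 1 - weight a D" by (simp add: gain_eq_diff one_enat_def)
  have "weight a D \<le> a 2"
    using weight_antimono[OF _ D] by (simp add: numeral_eq_enat one_enat_def)
  show ?thesis
  proof (cases K)
    case infinity
    then show ?thesis using gain_D weight_nonneg strictly_decreasing \<open>weight a D \<le> a 2\<close>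
      by (simp add: gain_eq_0)
  next
    case (enat k)
    show ?thesis
    proof (cases D)
      case infinity
      then show ?thesis using gain_D enat K antimono_weights[of 2 "1 + k"] strictly_decreasing
        by (simp add: gain_eq_diff one_enat_def)
    next
      case (enat m)
      then show ?thesis using D \<open>K = enat k\<close> K gain_D differences_shift_less[of m k]
        by (simp add: gain_eq_diff one_enat_def numeral_eq_enat)
    qed
  qed
qed

lemma gain_detour_less:
  assumes "2 \<le> D" "1 \<le> K" "D' \<le> D + K" shows "gain a D' (1 + K) < gain a D 1"
  using gain_mono[OF _ assms(3), of "1 + K"] gain_shift_less[OF assms(1,2)] by simp

theorem rank_monotone_lin_centrality: "rank_monotone (lin_centrality a)"
  unfolding rank_monotone_def
proof (intro allI impI ballI)
  fix V :: "'v set" and E x y w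
  assume graph: "is_digraph V E \<and> x \<in> V \<and> y \<in> V \<and> x \<noteq> y \<and> (x, y) \<notin> E"
    and "w \<in> V" "w \<noteq> y" and le: "lin_centrality a V E w \<le> lin_centrality a V E y"
  have "finite V" using graph by (simp add: is_digraph_def)
  define gain_w where "gain_w z = gain a (dist E z w) (dist E z x + 1 + dist E y w)" for z
  define gain_y where "gain_y z = gain a (dist E z y) (dist E z x + 1 + dist E y y)" for z
  have K: "1 \<le> dist E y w" using \<open>w \<noteq> y\<close> by (simp add: dist_ge_1)
  have "gain_w z \<le> gain_y z" for z
    using gain_detour_le[of "dist E z x + 1" "dist E z w" "dist E z y" "dist E y w"]
      dist_triangle_ineq[of E z w y] by (simp add: gain_w_def gain_y_def)
  moreover have "gain a (dist E x w) (1 + dist E y w) < gain a (dist E x y) 1"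
    using graph by (intro gain_detour_less[OF dist_ge_2 K dist_triangle_ineq]) auto
  then have "gain_w x < gain_y x" by (simp add: gain_w_def gain_y_def)
  ultimately have "sum gain_w V < sum gain_y V"
    using sum_strict_mono_ex1[OF \<open>finite V\<close>] graph by blast
  with le show "lin_centrality a V (insert (x, y) E) w < lin_centrality a V (insert (x, y) E) y"
    unfolding gain_w_def gain_y_def lin_centrality_insert_diff[OF \<open>finite V\<close>, symmetric]
    by linarith
qed

end

theorem proposition4:
  fixes a :: "nat \<Rightarrow> real"
  assumes "\<forall>i. a i \<ge> 0"
    and "\<forall>i. Delta a i \<le> 0"
    and "Delta a 1 < 0"
    and "\<forall>i. Delta (Delta a) i \<ge> 0"
    and "Delta (Delta a) 1 > 0"
  shows "rank_monotone (lin_centrality a :: 'v set \<Rightarrow> ('v \<times> 'v) set \<Rightarrow> 'v \<Rightarrow> real)"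
proof -
  interpret strictly_convex_weights a
  proof
    fix i :: nat
    show "0 \<le> a i" using assms(1) by simp
    assume "1 \<le> i"
    then show "a (Suc i) \<le> a i" "a (Suc i) - a (Suc (Suc i)) \<le> a i - a (Suc i)"
      using assms(2,4) by (auto simp: Delta_def dest: spec[of _ i])
  next
    show "a 2 < a 1" "a 2 - a 3 < a 1 - a 2"
      using assms(3,5) by (simp_all add: Delta_def numeral_eq_Suc)
  qed
  show ?thesis by (rule rank_monotone_lin_centrality)
qed

end
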